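(* Fix $N\ge1$. Partition the days $\{0,1,\dots,N-1\}$ into break days (on which the dose is forced to be $0$), fixed days (on which the dose is forced to equal a prescribed value $\bar d_k\ge0$), and free days, with at least one free day, and with the prescribed fixed doses satisfying $\sum_{k\text{ fixed}}\mathrm{BED}_O(\bar d_k)\le c$. Consider minimizing $Y_{N-1}^+$ over the free doses $d_k\ge0$ subject to $\sum_{k=0}^{N-1}\mathrm{BED}_O(d_k)\le c$ (with the forced values on break and fixed days). Assume $\phi(x)>0$ for all $x>0$ and $\phi$ is non-increasing in $x$. If $[\alpha/\beta]_O\ge\gamma[\alpha/\beta]_T$, then an optimal solution is to deliver a single nonzero dose on the last free day (all other free days receiving dose $0$). If $[\alpha/\beta]_O<\gamma[\alpha/\beta]_T$, then an optimal sequence of doses, restricted to the free days, is non-decreasing over the course of treatment.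
   Context: Model: Tumor parameters $\alpha_T>0$, $\beta_T>0$, $[\alpha/\beta]_T=\alpha_T/\beta_T$; organ-at-risk (OAR) parameter $[\alpha/\beta]_O>0$; sparing factor $0<\gamma<1$; OAR limit $c>0$. Define $\mathrm{BED}_T(d)=d\left(1+\frac{d}{[\alpha/\beta]_T}\right)$ and $\mathrm{BED}_O(d)=\gamma d\left(1+\frac{\gamma d}{[\alpha/\beta]_O}\right)$. Tumor growth between doses follows $\frac{1}{x}\frac{dx}{dt}=\phi(x)$, with $\phi:(0,\infty)\to\mathbb{R}$ continuous and non-increasing. Doses $d_0,\dots,d_{N-1}$ are delivered at times $0,1,\dots,N-1$. With $Y=\ln(\text{number of tumor cells})/\alpha_T$, let $F$ be the one-day growth map for $Y$ under the ODE. With initial cell number $X_0>0$ and $Y_0^-=\ln(X_0)/\alpha_T$: $Y_0^+=Y_0^--\mathrm{BED}_T(d_0)$, $Y_{i+1}^+=F(Y_i^+)-\mathrm{BED}_T(d_{i+1})$ for $i=0,\dots,N-2$. *)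

theory Defs
  imports "HOL-Analysis.Analysis"
begin

text \<open>Biologically effective doses. abT = [alpha/beta]_T, abO = [alpha/beta]_O, g = sparing factor.\<close>
definition BED_T :: "real \<Rightarrow> real \<Rightarrow> real" where
  "BED_T abT d = d * (1 + d / abT)"

definition BED_O :: "real \<Rightarrow> real \<Rightarrow> real \<Rightarrow> real" where
  "BED_O g abO d = g * d * (1 + g * d / abO)"

definition growth_sol :: "(real \<Rightarrow> real) \<Rightarrow> (real \<Rightarrow> real) \<Rightarrow> bool" where
  "growth_sol phi x \<longleftrightarrow>
     (\<forall>t\<in>{0..1}. x t > 0 \<and> (x has_real_derivative (x t * phi (x t))) (at t within {0..1}))"

text \<open>One-day growth map for Y = ln(cell number)/alphaT.\<close>
definition growth_map :: "real \<Rightarrow> (real \<Rightarrow> real) \<Rightarrow> real \<Rightarrow> real" where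
  "growth_map aT phi y =
     (THE z. \<exists>x. growth_sol phi x \<and> x 0 = exp (aT * y) \<and> z = ln (x 1) / aT)"

primrec Yplus :: "real \<Rightarrow> real \<Rightarrow> (real \<Rightarrow> real) \<Rightarrow> real \<Rightarrow> (nat \<Rightarrow> real) \<Rightarrow> nat \<Rightarrow> real" where
  "Yplus aT abT phi X0 d 0 = ln X0 / aT - BED_T abT (d 0)"
| "Yplus aT abT phi X0 d (Suc i) =
     growth_map aT phi (Yplus aT abT phi X0 d i) - BED_T abT (d (Suc i))"

definition feasible ::
  "nat \<Rightarrow> nat set \<Rightarrow> nat set \<Rightarrow> (nat \<Rightarrow> real) \<Rightarrow> real \<Rightarrow> real \<Rightarrow> real \<Rightarrow> (nat \<Rightarrow> real) \<Rightarrow> bool" where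
  "feasible N Brk Fix dbar g abO c d \<longleftrightarrow>
     (\<forall>k<N. d k \<ge> 0) \<and> (\<forall>k\<in>Brk. d k = 0) \<and> (\<forall>k\<in>Fix. d k = dbar k) \<and>
     (\<Sum>k<N. BED_O g abO (d k)) \<le> c"

definition optimal ::
  "real \<Rightarrow> real \<Rightarrow> (real \<Rightarrow> real) \<Rightarrow> real \<Rightarrow>
   nat \<Rightarrow> nat set \<Rightarrow> nat set \<Rightarrow> (nat \<Rightarrow> real) \<Rightarrow> real \<Rightarrow> real \<Rightarrow> real \<Rightarrow> (nat \<Rightarrow> real) \<Rightarrow> bool" where
  "optimal aT abT phi X0 N Brk Fix dbar g abO c d \<longleftrightarrow>
     feasible N Brk Fix dbar g abO c d \<and>
     (\<forall>d'. feasible N Brk Fix dbar g abO c d' \<longrightarrow>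
        Yplus aT abT phi X0 d (N - 1) \<le> Yplus aT abT phi X0 d' (N - 1))"

end

theory Submission
  imports Defs
begin

text \<open>Since \<phi> is non-increasing, the log-distance between two solutions of the growth ODE
  cannot increase (a barrier argument); solutions exist up to time 1 because the ODE for
  u = ln x is autonomous and 1/\<phi>(exp u) is nondecreasing, so it is integrated by inverting a
  primitive of 1/\<phi>(exp u). Hence the one-day map F is monotone and nonexpansive:
  0 \<le> F z - F y \<le> z - y for y \<le> z. Consequently tumour BED delivered later is never less
  effective: while the running surplus of tumour BED of a plan d over a plan e is nonnegative,
  e ends at most that surplus above d.

  If [\<alpha>/\<beta>]_O \<ge> \<gamma>[\<alpha>/\<beta>]_T, then \<gamma> BED_T = BED_O + \<kappa> (\<gamma> d)^2 with \<kappa> \<ge> 0, and a sum of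
  squares is at most the square of the sum, so one dose spending the whole remaining OAR budget
  has at least the tumour BED of any free doses within that budget; given on the last free day
  it beats every feasible plan. Otherwise, swapping two free doses so that the larger comes later
  keeps the plan feasible and does not increase Y; among the optimal plans (which exist by
  compactness) one maximising \<Sum> k * d k is therefore non-decreasing on the free days.\<close>

section \<open>Monotone nonexpansive maps\<close>

definition mono_nonexpansive :: "(real \<Rightarrow> real) \<Rightarrow> bool" where
  "mono_nonexpansive F \<longleftrightarrow> (\<forall>y z. y \<le> z \<longrightarrow> F y \<le> F z \<and> F z - F y \<le> z - y)"

lemma mono_nonexpansiveD:
  assumes "mono_nonexpansive F" "y \<le> z"
  shows "F y \<le> F z" and "F z - F y \<le> z - y"
  using assms by (auto simp: mono_nonexpansive_def)

lemma mono_nonexpansive_shift: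
  assumes "mono_nonexpansive F" "y \<le> z + p" "0 \<le> p"
  shows "F y \<le> F z + p"
  using mono_nonexpansiveD[OF assms(1,2)] mono_nonexpansiveD(2)[OF assms(1), of z "z + p"] assms(3)
  by linarith

lemma mono_nonexpansive_continuous:
  assumes "mono_nonexpansive F"
  shows "continuous_on UNIV F"
proof (rule lipschitz_on_continuous_on)
  show "1-lipschitz_on UNIV F"
  proof (rule lipschitz_onI)
    fix y z :: real
    show "dist (F y) (F z) \<le> 1 * dist y z"
      using mono_nonexpansiveD[OF assms, of y z] mono_nonexpansiveD[OF assms, of z y]
      by (cases "y \<le> z") (auto simp: dist_real_def)
  qed simp
qed

section \<open>The one-day growth map\<close>

lemma nonpos_if_deriv_nonpos_where_pos:
  fixes f f' :: "real \<Rightarrow> real"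
  assumes der: "\<And>s. s \<in> {0..1} \<Longrightarrow> (f has_real_derivative f' s) (at s within {0..1})"
    and f0: "f 0 \<le> 0"
    and deriv_nonpos: "\<And>s. s \<in> {0..1} \<Longrightarrow> f s > 0 \<Longrightarrow> f' s \<le> 0"
    and t: "t \<in> {0..1}"
  shows "f t \<le> 0"
proof (rule ccontr)
  assume ft: "\<not> f t \<le> 0"
  define S where "S = {s \<in> {0..t}. f s \<le> 0}"
  have bdd: "bdd_above S"
    by (rule bdd_above_mono[OF bdd_above_Icc]) (auto simp: S_def)
  have "continuous_on {0..t} f"
    using t by (intro DERIV_continuous_on[of _ _ f'] DERIV_subset[OF der]) auto
  then have "closed S"
    unfolding S_def by (intro continuous_on_closed_Collect_le continuous_on_const) auto
  moreover have "0 \<in> S" using f0 t by (simp add: S_def)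
  ultimately have "Sup S \<in> S"
    using bdd by (intro closed_contains_Sup) auto
  define s where "s = Sup S"
  have fs: "f s \<le> 0" and s0: "0 \<le> s" and st: "s < t"
    using \<open>Sup S \<in> S\<close> ft by (auto simp: s_def S_def order.order_iff_strict)
  have pos: "f z > 0" if "s < z" "z \<le> t" for z
  proof (rule ccontr)
    assume "\<not> f z > 0"
    then have "z \<in> S" using that s0 by (simp add: S_def)
    then have "z \<le> s" unfolding s_def using bdd by (rule cSup_upper)
    then show False using that by simp
  qed
  have "(f has_derivative (\<lambda>h. f' z * h)) (at z within {s..t})" if "s \<le> z" "z \<le> t" for z
    using der[of z] that s0 t unfolding has_field_derivative_def
    by (auto intro: has_derivative_subset)
  then obtain z where z: "z \<in> {s<..<t}" "f t - f s = f' z * (t - s)"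
    using mvt_simple[OF st, of f "\<lambda>z h. f' z * h"] by blast
  have "f' z * (t - s) \<le> 0"
    using z st t s0 deriv_nonpos[of z] pos[of z] by (intro mult_nonpos_nonneg) auto
  then show False using z fs ft by simp
qed

lemma inv_into_primitive_has_derivative:
  fixes G h :: "real \<Rightarrow> real"
  assumes dG: "\<And>w. a < w \<Longrightarrow> (G has_real_derivative 1 / h w) (at w)"
    and pos: "\<And>w. a < w \<Longrightarrow> h w > 0" and v: "a < v"
  shows "inv_into {a<..} G (G v) = v"
    and "(inv_into {a<..} G has_real_derivative h v) (at (G v))"
proof -
  have "G w < G w'" if "a < w" "w < w'" for w w'
  proof (rule DERIV_pos_imp_increasing[OF that(2)])
    fix x assume "w \<le> x" "x \<le> w'"
    then show "\<exists>y. (G has_real_derivative y) (at x) \<and> y > 0"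
      using dG[of x] pos[of x] that by auto
  qed
  then have inv_G: "inv_into {a<..} G (G w) = w" if "a < w" for w
    using that by (intro inv_into_f_f strict_mono_on_imp_inj_on) (auto simp: strict_mono_on_def)
  then show "inv_into {a<..} G (G v) = v" using v .
  have "(inv_into {a<..} G has_derivative (\<lambda>x. h v * x)) (at (G v))"
  proof (rule has_derivative_inverse_strong[of "{a<..}" v G])
    show "(G has_derivative (\<lambda>x. 1 / h v * x)) (at v)"
      using v dG[of v] by (simp only: has_field_derivative_def)
    show "(\<lambda>x. 1 / h v * x) \<circ> (\<lambda>x. h v * x) = id"
      using pos[OF v] by (auto simp: fun_eq_iff)
    show "continuous_on {a<..} G"
      using dG by (intro has_real_derivative_imp_continuous_on) auto
  qed (use v inv_G in auto)
  then show "(inv_into {a<..} G has_real_derivative h v) (at (G v))"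
    by (simp only: has_field_derivative_def)
qed

lemma autonomous_ode_solution_exists:
  fixes h :: "real \<Rightarrow> real"
  assumes cont: "continuous_on UNIV h" and pos: "\<And>v. h v > 0"
    and antimono: "\<And>v w. v \<le> w \<Longrightarrow> h w \<le> h v"
  shows "\<exists>u. u 0 = u0 \<and> (\<forall>t\<in>{0..1}. (u has_real_derivative h (u t)) (at t))"
proof -
  define a where "a = u0 - 1"
  define G where "G = (\<lambda>v. integral {a..v} (\<lambda>w. 1 / h w))"
  have inv_h_cont: "continuous_on UNIV (\<lambda>w. 1 / h w)"
    using pos by (intro continuous_intros cont) (auto simp: less_imp_neq[symmetric])
  have dG: "(G has_real_derivative 1 / h v) (at v)" if "a < v" for v
  proof -
    have "(G has_real_derivative 1 / h v) (at v within {a..v + 1})"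
      unfolding G_def using that
      by (intro integral_has_real_derivative continuous_on_subset[OF inv_h_cont]) auto
    then show ?thesis using at_within_Icc_at[of a v "v + 1"] that by simp
  qed
  have G_inv: "inv_into {a<..} G (G v) = v" "(inv_into {a<..} G has_real_derivative h v) (at (G v))"
    if "a < v" for v
    using inv_into_primitive_has_derivative[of a G h v] dG pos that by auto
  \<comment> \<open>1/h is nondecreasing, so G climbs by 1 within distance h u0 to the right of u0:
    the solution u t = G^-1 (G u0 + t) does not escape before time 1.\<close>
  define U where "U = u0 + h u0"
  have "u0 < U" using pos by (simp add: U_def)
  have G_U: "G u0 + 1 \<le> G U"
  proof -
    have "\<And>x. u0 \<le> x \<Longrightarrow> x \<le> U \<Longrightarrow> (G has_real_derivative 1 / h x) (at x)"
      by (rule dG) (simp add: a_def)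
    then obtain z where z: "u0 < z" "G U - G u0 = (U - u0) * (1 / h z)"
      using MVT2[OF \<open>u0 < U\<close>, of G "\<lambda>x. 1 / h x"] by blast
    have "1 / h u0 \<le> 1 / h z"
      using antimono[of u0 z] pos z by (simp add: frac_le)
    then show ?thesis using z pos[of u0] by (simp add: U_def field_simps)
  qed
  define u where "u = (\<lambda>t. inv_into {a<..} G (G u0 + t))"
  have "(u has_real_derivative h (u t)) (at t)" if t: "t \<in> {0..1}" for t
  proof -
    have "continuous_on {u0..U} G"
      using dG by (intro has_real_derivative_imp_continuous_on[where f'="\<lambda>x. 1 / h x"]) (simp add: a_def)
    then obtain v where v: "u0 \<le> v" "G v = G u0 + t"
      using IVT'[of G u0 "G u0 + t" U] t G_U \<open>u0 < U\<close> by auto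
    then have "a < v" by (simp add: a_def)
    have "(inv_into {a<..} G has_real_derivative h v) (at (G u0 + t))"
      using G_inv(2)[OF \<open>a < v\<close>] v(2) by simp
    then have "((\<lambda>s. inv_into {a<..} G (G u0 + s)) has_real_derivative h v) (at t)"
      using DERIV_chain2[OF _ DERIV_add[OF DERIV_const DERIV_ident], of "inv_into {a<..} G" "h v" "G u0" t]
      by simp
    moreover have "u t = v" using v G_inv(1)[OF \<open>a < v\<close>] by (simp add: u_def)
    ultimately show ?thesis by (simp add: u_def)
  qed
  moreover have "u 0 = u0" using G_inv(1)[of u0] by (simp add: u_def a_def)
  ultimately show ?thesis by blast
qed

lemma growth_sol_exists:
  assumes phi_cont: "continuous_on {0<..} phi"
    and phi_mono: "\<And>x y. 0 < x \<Longrightarrow> x \<le> y \<Longrightarrow> phi y \<le> phi x"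
    and phi_pos: "\<And>x. x > 0 \<Longrightarrow> phi x > 0"
  shows "\<exists>x. growth_sol phi x \<and> x 0 = exp u0"
proof -
  have "continuous_on UNIV (\<lambda>v. phi (exp v))"
    by (intro continuous_on_compose2[OF phi_cont] continuous_intros) auto
  then obtain u where u0: "u 0 = u0"
    and u: "\<And>t. t \<in> {0..1} \<Longrightarrow> (u has_real_derivative phi (exp (u t))) (at t)"
    using autonomous_ode_solution_exists[of "\<lambda>v. phi (exp v)" u0] phi_pos phi_mono by auto
  have "growth_sol phi (\<lambda>t. exp (u t))"
    unfolding growth_sol_def
    using DERIV_chain2[OF DERIV_exp u] by (auto intro: has_field_derivative_at_within)
  then show ?thesis using u0 by auto
qed

lemma growth_sol_ln_deriv:
  assumes "growth_sol phi x" "t \<in> {0..1}"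
  shows "((\<lambda>t. ln (x t)) has_real_derivative phi (x t)) (at t within {0..1})"
proof -
  have xt: "x t > 0" and d: "(x has_real_derivative x t * phi (x t)) (at t within {0..1})"
    using assms unfolding growth_sol_def by auto
  show ?thesis
    using DERIV_chain2[OF DERIV_ln[OF xt] d] xt by (simp add: field_simps)
qed

lemma growth_sol_compare:
  assumes phi_mono: "\<And>x y. 0 < x \<Longrightarrow> x \<le> y \<Longrightarrow> phi y \<le> phi x"
    and x: "growth_sol phi x" and y: "growth_sol phi y"
    and le: "ln (x 0) \<le> ln (y 0)"
  shows "ln (x 1) \<le> ln (y 1)" and "ln (y 1) - ln (x 1) \<le> ln (y 0) - ln (x 0)"
proof -
  have pos: "x t > 0" "y t > 0" if "t \<in> {0..1}" for t
    using x y that unfolding growth_sol_def by auto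
  have deriv: "((\<lambda>t. ln (x t) - ln (y t)) has_real_derivative phi (x t) - phi (y t)) (at t within {0..1})"
    if "t \<in> {0..1}" for t
    using growth_sol_ln_deriv[OF x that] growth_sol_ln_deriv[OF y that] by (rule DERIV_diff)
  have "ln (x 1) - ln (y 1) \<le> 0"
  proof (rule nonpos_if_deriv_nonpos_where_pos[OF deriv])
    show "phi (x t) - phi (y t) \<le> 0" if "t \<in> {0..1}" "0 < ln (x t) - ln (y t)" for t
      using that pos[OF that(1)] phi_mono[of "y t" "x t"] by simp
  qed (use le in auto)
  then show "ln (x 1) \<le> ln (y 1)" by simp
  have "(ln (y 1) - ln (x 1)) - (ln (y 0) - ln (x 0)) \<le> 0"
  proof (rule nonpos_if_deriv_nonpos_where_pos[where f="\<lambda>t. (ln (y t) - ln (x t)) - (ln (y 0) - ln (x 0))"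
        and f'="\<lambda>t. phi (y t) - phi (x t)"])
    show "((\<lambda>t. (ln (y t) - ln (x t)) - (ln (y 0) - ln (x 0))) has_real_derivative phi (y t) - phi (x t))
        (at t within {0..1})" if "t \<in> {0..1}" for t
      using DERIV_diff[OF DERIV_minus[OF deriv[OF that]] DERIV_const] by simp
    show "phi (y t) - phi (x t) \<le> 0"
      if "t \<in> {0..1}" "0 < (ln (y t) - ln (x t)) - (ln (y 0) - ln (x 0))" for t
    proof -
      have "ln (x t) \<le> ln (y t)" using that le by linarith
      then show ?thesis using pos[OF that(1)] phi_mono[of "x t" "y t"] by simp
    qed
  qed auto
  then show "ln (y 1) - ln (x 1) \<le> ln (y 0) - ln (x 0)" by simp
qed

lemma growth_map_eq:
  assumes phi_mono: "\<And>x y. 0 < x \<Longrightarrow> x \<le> y \<Longrightarrow> phi y \<le> phi x"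
    and x: "growth_sol phi x" and x0: "x 0 = exp (aT * y)"
  shows "growth_map aT phi y = ln (x 1) / aT"
  unfolding growth_map_def
proof (rule the_equality)
  fix z assume "\<exists>x'. growth_sol phi x' \<and> x' 0 = exp (aT * y) \<and> z = ln (x' 1) / aT"
  then obtain x' where x': "growth_sol phi x'" "x' 0 = exp (aT * y)" "z = ln (x' 1) / aT"
    by blast
  have "ln (x 1) = ln (x' 1)"
    using growth_sol_compare(1)[OF phi_mono x x'(1)] growth_sol_compare(1)[OF phi_mono x'(1) x] x0 x'(2)
    by (simp add: order_antisym)
  then show "z = ln (x 1) / aT" using x' by simp
qed (use x x0 in blast)

lemma mono_nonexpansive_growth_map:
  assumes aT: "aT > 0"
    and phi_cont: "continuous_on {0<..} phi"
    and phi_mono: "\<And>x y. 0 < x \<Longrightarrow> x \<le> y \<Longrightarrow> phi y \<le> phi x"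
    and phi_pos: "\<And>x. x > 0 \<Longrightarrow> phi x > 0"
  shows "mono_nonexpansive (growth_map aT phi)"
  unfolding mono_nonexpansive_def
proof (intro allI impI)
  fix y z :: real assume "y \<le> z"
  obtain x1 where x1: "growth_sol phi x1" "x1 0 = exp (aT * y)"
    using growth_sol_exists[OF phi_cont phi_mono phi_pos] by blast
  obtain x2 where x2: "growth_sol phi x2" "x2 0 = exp (aT * z)"
    using growth_sol_exists[OF phi_cont phi_mono phi_pos] by blast
  have le: "ln (x1 0) \<le> ln (x2 0)" using x1 x2 \<open>y \<le> z\<close> aT by simp
  have "ln (x1 1) / aT \<le> ln (x2 1) / aT"
    using growth_sol_compare(1)[OF phi_mono x1(1) x2(1) le] aT by (simp add: divide_right_mono)
  moreover have "ln (x2 1) / aT - ln (x1 1) / aT \<le> z - y"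
    using growth_sol_compare(2)[OF phi_mono x1(1) x2(1) le] x1 x2 aT
    by (simp add: diff_divide_distrib[symmetric] pos_divide_le_eq mult.commute right_diff_distrib)
  ultimately show "growth_map aT phi y \<le> growth_map aT phi z \<and>
      growth_map aT phi z - growth_map aT phi y \<le> z - y"
    using growth_map_eq[OF phi_mono x1] growth_map_eq[OF phi_mono x2] by simp
qed

section \<open>Biologically effective doses\<close>

lemma BED_T_zero [simp]: "BED_T abT 0 = 0"
  by (simp add: BED_T_def)

lemma BED_O_zero [simp]: "BED_O g abO 0 = 0"
  by (simp add: BED_O_def)

lemma BED_T_nonneg: "abT > 0 \<Longrightarrow> 0 \<le> x \<Longrightarrow> 0 \<le> BED_T abT x"
  by (simp add: BED_T_def)

lemma BED_T_mono:
  assumes "abT > 0" "0 \<le> x" "x \<le> y"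
  shows "BED_T abT x \<le> BED_T abT y"
  using assms by (auto simp: BED_T_def intro!: mult_mono add_mono divide_right_mono)

lemma BED_O_nonneg: "g > 0 \<Longrightarrow> abO > 0 \<Longrightarrow> 0 \<le> x \<Longrightarrow> 0 \<le> BED_O g abO x"
  by (simp add: BED_O_def)

lemma BED_O_ge_linear: "g > 0 \<Longrightarrow> abO > 0 \<Longrightarrow> 0 \<le> x \<Longrightarrow> g * x \<le> BED_O g abO x"
  by (simp add: BED_O_def algebra_simps)

lemma BED_O_surj:
  assumes "g > 0" "abO > 0" "r \<ge> 0"
  shows "\<exists>D\<ge>0. BED_O g abO D = r"
proof -
  have "r \<le> BED_O g abO (r / g)"
    using BED_O_ge_linear[of g abO "r / g"] assms by simp
  moreover have "continuous_on {0..r / g} (BED_O g abO)"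
    unfolding BED_O_def by (intro continuous_intros) (use assms in auto)
  ultimately obtain D where "0 \<le> D" "BED_O g abO D = r"
    using IVT'[of "BED_O g abO" 0 r "r / g"] assms by auto
  then show ?thesis by blast
qed

lemma sum_squares_le_square_sum:
  fixes s :: "'a \<Rightarrow> real"
  shows "finite S \<Longrightarrow> (\<And>i. i \<in> S \<Longrightarrow> s i \<ge> 0) \<Longrightarrow> (\<Sum>i\<in>S. (s i)\<^sup>2) \<le> (\<Sum>i\<in>S. s i)\<^sup>2"
proof (induction S rule: finite_induct)
  case (insert x F)
  have "0 \<le> s x * (\<Sum>i\<in>F. s i)"
    using insert.prems by (intro mult_nonneg_nonneg sum_nonneg) auto
  then show ?case using insert by (simp add: power2_eq_square distrib_left distrib_right)
qed simp

lemma BED_T_eq_BED_O_plus: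
  "g > 0 \<Longrightarrow> abT > 0 \<Longrightarrow> abO > 0 \<Longrightarrow>
    g * BED_T abT x = BED_O g abO x + (1 / (g * abT) - 1 / abO) * (g * x)\<^sup>2"
  by (simp add: BED_O_def BED_T_def power2_eq_square field_simps)

lemma BED_T_sum_le_single:
  assumes abT: "abT > 0" and g: "g > 0" and abO: "abO > 0" and ratio: "abO \<ge> g * abT"
    and S: "finite S" and d: "\<And>i. i \<in> S \<Longrightarrow> d i \<ge> 0" and D: "D \<ge> 0"
    and budget: "(\<Sum>i\<in>S. BED_O g abO (d i)) \<le> BED_O g abO D"
  shows "(\<Sum>i\<in>S. BED_T abT (d i)) \<le> BED_T abT D"
proof -
  have BED_O_expand: "BED_O g abO x = g * x + (g * x)\<^sup>2 / abO" for x
    by (simp add: BED_O_def power2_eq_square algebra_simps)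
  have squares: "(\<Sum>i\<in>S. (g * d i)\<^sup>2) \<le> (g * D)\<^sup>2"
  proof (rule ccontr)
    assume "\<not> ?thesis"
    then have lt: "(g * D)\<^sup>2 < (\<Sum>i\<in>S. (g * d i)\<^sup>2)" by simp
    also have "\<dots> \<le> (\<Sum>i\<in>S. g * d i)\<^sup>2"
      using S d g by (intro sum_squares_le_square_sum) (auto intro: mult_nonneg_nonneg less_imp_le)
    finally have "g * D < (\<Sum>i\<in>S. g * d i)"
      by (rule power_less_imp_less_base) (use d g in \<open>auto intro!: sum_nonneg\<close>)
    moreover have "(g * D)\<^sup>2 / abO < (\<Sum>i\<in>S. (g * d i)\<^sup>2) / abO"
      using lt abO by (simp add: divide_strict_right_mono)
    ultimately have "BED_O g abO D < (\<Sum>i\<in>S. BED_O g abO (d i))"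
      by (simp add: BED_O_expand sum.distrib sum_divide_distrib)
    then show False using budget by simp
  qed
  define \<kappa> where "\<kappa> = 1 / (g * abT) - 1 / abO"
  have "\<kappa> \<ge> 0" using ratio abT g abO unfolding \<kappa>_def by (simp add: frac_le)
  have "g * (\<Sum>i\<in>S. BED_T abT (d i)) = (\<Sum>i\<in>S. BED_O g abO (d i)) + \<kappa> * (\<Sum>i\<in>S. (g * d i)\<^sup>2)"
    by (simp add: sum_distrib_left BED_T_eq_BED_O_plus[OF g abT abO] \<kappa>_def sum.distrib)
  also have "\<dots> \<le> BED_O g abO D + \<kappa> * (g * D)\<^sup>2"
    using budget squares \<open>\<kappa> \<ge> 0\<close> by (intro add_mono mult_left_mono) auto
  also have "\<dots> = g * BED_T abT D" by (simp add: BED_T_eq_BED_O_plus[OF g abT abO] \<kappa>_def)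
  finally show ?thesis using g by simp
qed

section \<open>Comparing dose plans\<close>

lemma Yplus_cong:
  "(\<And>k. k \<le> n \<Longrightarrow> d k = e k) \<Longrightarrow> Yplus aT abT phi X0 d n = Yplus aT abT phi X0 e n"
  by (induction n) auto

lemma Yplus_le_plus_surplus:
  assumes F: "mono_nonexpansive (growth_map aT phi)"
    and surplus: "\<And>k. k < n \<Longrightarrow> 0 \<le> (\<Sum>i\<le>k. BED_T abT (d i) - BED_T abT (e i))"
  shows "Yplus aT abT phi X0 e n
      \<le> Yplus aT abT phi X0 d n + (\<Sum>i\<le>n. BED_T abT (d i) - BED_T abT (e i))"
  using surplus
proof (induction n)
  case (Suc n)
  then have "growth_map aT phi (Yplus aT abT phi X0 e n)
      \<le> growth_map aT phi (Yplus aT abT phi X0 d n) + (\<Sum>i\<le>n. BED_T abT (d i) - BED_T abT (e i))"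
    by (intro mono_nonexpansive_shift[OF F]) auto
  then show ?case by simp
qed simp

lemma Yplus_le_if_equal_after:
  assumes F: "mono_nonexpansive (growth_map aT phi)"
    and le: "Yplus aT abT phi X0 e m \<le> Yplus aT abT phi X0 d m"
    and equal: "\<And>k. m < k \<Longrightarrow> k \<le> n \<Longrightarrow> e k = d k" and "m \<le> n"
  shows "Yplus aT abT phi X0 e n \<le> Yplus aT abT phi X0 d n"
  using \<open>m \<le> n\<close> equal
proof (induction n rule: dec_induct)
  case (step n)
  then show ?case using mono_nonexpansiveD(1)[OF F] by simp
qed (use le in simp)

lemma Yplus_swap_le:
  assumes F: "mono_nonexpansive (growth_map aT phi)" and abT: "abT > 0"
    and "j < k" "k \<le> n" "0 \<le> d k" "d k \<le> d j"
  shows "Yplus aT abT phi X0 (d(j := d k, k := d j)) n \<le> Yplus aT abT phi X0 d n"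
proof -
  define e where "e = d(j := d k, k := d j)"
  define A where "A = BED_T abT (d j) - BED_T abT (d k)"
  have "A \<ge> 0" using BED_T_mono[OF abT] assms unfolding A_def by simp
  have surplus: "(\<Sum>i\<le>l. BED_T abT (d i) - BED_T abT (e i))
      = (if j \<le> l then A else 0) - (if k \<le> l then A else 0)" for l
  proof -
    have "(\<Sum>i\<le>l. BED_T abT (d i) - BED_T abT (e i))
        = (\<Sum>i\<le>l. (if i = j then A else 0) - (if i = k then A else 0))"
      using \<open>j < k\<close> by (intro sum.cong) (auto simp: A_def e_def)
    then show ?thesis by (simp add: sum_subtractf)
  qed
  have "Yplus aT abT phi X0 e n \<le> Yplus aT abT phi X0 d n + (\<Sum>i\<le>n. BED_T abT (d i) - BED_T abT (e i))"
    by (rule Yplus_le_plus_surplus[OF F]) (use \<open>A \<ge> 0\<close> \<open>j < k\<close> in \<open>simp add: surplus\<close>)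
  also have "\<dots> = Yplus aT abT phi X0 d n" using assms by (simp add: surplus)
  finally show ?thesis by (simp add: e_def)
qed

lemma Yplus_le_single_dose:
  assumes F: "mono_nonexpansive (growth_map aT phi)" and abT: "abT > 0"
    and S: "finite S" "m \<in> S" "\<And>k. k \<in> S \<Longrightarrow> k \<le> m" and "m \<le> n"
    and agree: "\<And>k. k \<le> n \<Longrightarrow> k \<notin> S \<Longrightarrow> e k = d k"
    and single: "\<And>k. k \<in> S \<Longrightarrow> k \<noteq> m \<Longrightarrow> e k = 0"
    and d_nonneg: "\<And>k. k \<in> S \<Longrightarrow> 0 \<le> d k"
    and dominated: "(\<Sum>k\<in>S. BED_T abT (d k)) \<le> BED_T abT (e m)"
  shows "Yplus aT abT phi X0 e n \<le> Yplus aT abT phi X0 d n"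
proof -
  have surplus: "(\<Sum>i\<le>l. BED_T abT (d i) - BED_T abT (e i))
      = (\<Sum>i\<in>S \<inter> {..l}. BED_T abT (d i)) - (if m \<le> l then BED_T abT (e m) else 0)"
    if "l \<le> n" for l
  proof -
    have "(\<Sum>i\<le>l. BED_T abT (d i) - BED_T abT (e i))
        = (\<Sum>i\<le>l. (if i \<in> S then BED_T abT (d i) else 0) - (if i = m then BED_T abT (e m) else 0))"
      using that S(2) by (intro sum.cong) (auto simp: agree single)
    then show ?thesis
      using sum.inter_restrict[of "{..l}" "\<lambda>i. BED_T abT (d i)" S] by (simp add: sum_subtractf Int_commute)
  qed
  have "Yplus aT abT phi X0 e m
      \<le> Yplus aT abT phi X0 d m + (\<Sum>i\<le>m. BED_T abT (d i) - BED_T abT (e i))"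
  proof (rule Yplus_le_plus_surplus[OF F])
    show "0 \<le> (\<Sum>i\<le>k. BED_T abT (d i) - BED_T abT (e i))" if "k < m" for k
      using that \<open>m \<le> n\<close> S(1) abT d_nonneg
      by (simp add: surplus) (auto intro!: sum_nonneg BED_T_nonneg)
  qed
  also have "\<dots> \<le> Yplus aT abT phi X0 d m"
  proof -
    have "S \<inter> {..m} = S" using S(3) by auto
    then show ?thesis using \<open>m \<le> n\<close> dominated by (simp add: surplus)
  qed
  finally show ?thesis
  proof (rule Yplus_le_if_equal_after[OF F _ _ \<open>m \<le> n\<close>])
    show "e k = d k" if "m < k" "k \<le> n" for k
      using that S(3)[of k] by (intro agree) auto
  qed
qed

section \<open>Optimal plans\<close>

lemma feasible_free_budget:
  assumes d: "feasible N Brk Fix dbar g abO c d" and g: "g > 0" and abO: "abO > 0"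
    and sub: "Fix \<subseteq> {..<N}" "Free \<subseteq> {..<N}" and disj: "Fix \<inter> Free = {}"
  shows "(\<Sum>k\<in>Free. BED_O g abO (d k)) \<le> c - (\<Sum>k\<in>Fix. BED_O g abO (dbar k))"
proof -
  have fin: "finite Fix" "finite Free" using sub by (auto intro: finite_subset)
  have "(\<Sum>k\<in>Fix. BED_O g abO (dbar k)) + (\<Sum>k\<in>Free. BED_O g abO (d k))
      = (\<Sum>k\<in>Fix \<union> Free. BED_O g abO (d k))"
    using d fin disj by (simp add: sum.union_disjoint feasible_def)
  also have "\<dots> \<le> (\<Sum>k<N. BED_O g abO (d k))"
    using d sub g abO by (intro sum_mono2) (auto simp: feasible_def intro!: BED_O_nonneg)
  also have "\<dots> \<le> c" using d by (simp add: feasible_def)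
  finally show ?thesis by simp
qed

lemma optimal_single_dose_exists:
  assumes F: "mono_nonexpansive (growth_map aT phi)"
    and abT: "abT > 0" and abO: "abO > 0" and g: "g > 0" and ratio: "abO \<ge> g * abT"
    and part: "Brk \<union> Fix \<union> Free = {..<N}"
    and disj: "Brk \<inter> Fix = {}" "Brk \<inter> Free = {}" "Fix \<inter> Free = {}"
    and free_ne: "Free \<noteq> {}"
    and dbar_nn: "\<And>k. k \<in> Fix \<Longrightarrow> dbar k \<ge> 0"
    and fix_budget: "(\<Sum>k\<in>Fix. BED_O g abO (dbar k)) \<le> c"
  shows "\<exists>d. optimal aT abT phi X0 N Brk Fix dbar g abO c d \<and>
            (\<forall>k\<in>Free. k \<noteq> Max Free \<longrightarrow> d k = 0)"
proof -
  have sub: "Fix \<subseteq> {..<N}" "Free \<subseteq> {..<N}" using part by auto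
  have fin: "finite Free" using sub(2) by (rule finite_subset) simp
  define m where "m = Max Free"
  have m: "m \<in> Free" "\<And>k. k \<in> Free \<Longrightarrow> k \<le> m" using fin free_ne by (auto simp: m_def)
  obtain D where D: "D \<ge> 0" "BED_O g abO D = c - (\<Sum>k\<in>Fix. BED_O g abO (dbar k))"
    using BED_O_surj[OF g abO, of "c - (\<Sum>k\<in>Fix. BED_O g abO (dbar k))"] fix_budget by auto
  define ds where "ds = (\<lambda>k. if k \<in> Fix then dbar k else if k = m then D else 0)"
  have "(\<Sum>k<N. BED_O g abO (ds k))
      = (\<Sum>k<N. (if k \<in> Fix then BED_O g abO (dbar k) else 0) + (if k = m then BED_O g abO D else 0))"
    using m disj by (intro sum.cong) (auto simp: ds_def)
  also have "\<dots> = c"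
    using sub m(1) D(2) by (simp add: sum.distrib sum.inter_restrict[symmetric] Int_absorb1 subset_eq)
  finally have feasible_ds: "feasible N Brk Fix dbar g abO c ds"
    using dbar_nn D(1) disj m(1) unfolding feasible_def ds_def by auto
  have "Yplus aT abT phi X0 ds (N - 1) \<le> Yplus aT abT phi X0 d (N - 1)"
    if d: "feasible N Brk Fix dbar g abO c d" for d
  proof (rule Yplus_le_single_dose[OF F abT fin m])
    show d_nonneg: "0 \<le> d k" if "k \<in> Free" for k
      using that d sub unfolding feasible_def by blast
    show "m \<le> N - 1" using m(1) sub by auto
    show "ds k = d k" if "k \<le> N - 1" "k \<notin> Free" for k
    proof -
      have "k \<in> Brk \<or> k \<in> Fix" using that m(1) sub part by (cases N) auto
      then show ?thesis using that d disj(1) m(1) unfolding feasible_def ds_def by auto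
    qed
    show "ds k = 0" if "k \<in> Free" "k \<noteq> m" for k
      using that disj by (auto simp: ds_def)
    have "(\<Sum>k\<in>Free. BED_O g abO (d k)) \<le> BED_O g abO D"
      using feasible_free_budget[OF d g abO sub disj(3)] D(2) by simp
    then show "(\<Sum>k\<in>Free. BED_T abT (d k)) \<le> BED_T abT (ds m)"
      using BED_T_sum_le_single[OF abT g abO ratio fin d_nonneg D(1)] m(1) disj(3)
      by (auto simp: ds_def)
  qed
  moreover have "\<forall>k\<in>Free. k \<noteq> Max Free \<longrightarrow> ds k = 0"
    using disj(3) by (auto simp: ds_def m_def)
  ultimately show ?thesis
    using feasible_ds unfolding optimal_def by blast
qed

lemma continuous_on_Yplus:
  assumes F: "mono_nonexpansive (growth_map aT phi)" and abT: "abT \<noteq> 0"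
  shows "continuous_on UNIV (\<lambda>d::nat \<Rightarrow> real. Yplus aT abT phi X0 d n)"
proof -
  have BED_T: "continuous_on UNIV (\<lambda>d::nat \<Rightarrow> real. BED_T abT (d k))" for k
    unfolding BED_T_def using abT
    by (intro continuous_intros continuous_on_product_coordinates) auto
  show ?thesis
  proof (induction n)
    case (Suc n)
    then show ?case
      using continuous_on_compose2[OF mono_nonexpansive_continuous[OF F] Suc] BED_T
      by (auto intro!: continuous_intros)
  qed (use BED_T in \<open>auto intro!: continuous_intros\<close>)
qed

lemma compact_bounded_sequences: "compact {d::nat \<Rightarrow> real. \<forall>k. 0 \<le> d k \<and> d k \<le> M}"
proof -
  have "compactin (product_topology (\<lambda>_. euclideanreal) UNIV) (PiE UNIV (\<lambda>_::nat. {0..M}))"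
    by (simp add: compactin_PiE)
  moreover have "PiE UNIV (\<lambda>_::nat. {0..M}) = {d::nat \<Rightarrow> real. \<forall>k. 0 \<le> d k \<and> d k \<le> M}"
    by (auto simp: PiE_def Pi_def)
  ultimately show ?thesis by (simp add: euclidean_product_topology)
qed

lemma closed_feasible:
  assumes "abO \<noteq> 0"
  shows "closed {d::nat \<Rightarrow> real. feasible N Brk Fix dbar g abO c d}"
proof -
  have "{d::nat \<Rightarrow> real. feasible N Brk Fix dbar g abO c d} =
     (\<Inter>k<N. {d. 0 \<le> d k}) \<inter> (\<Inter>k\<in>Brk. {d. d k = 0}) \<inter> (\<Inter>k\<in>Fix. {d. d k = dbar k})
     \<inter> {d. (\<Sum>k<N. BED_O g abO (d k)) \<le> c}"
    by (auto simp: feasible_def)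
  moreover have "closed {d::nat \<Rightarrow> real. (\<Sum>k<N. BED_O g abO (d k)) \<le> c}"
    unfolding BED_O_def using assms by (intro closed_Collect_le continuous_intros) auto
  ultimately show ?thesis
    by (auto intro!: closed_Int closed_INT closed_Collect_le closed_Collect_eq continuous_intros)
qed

lemma feasible_dose_le:
  assumes "feasible N Brk Fix dbar g abO c d" "g > 0" "abO > 0" "k < N"
  shows "d k \<le> c / g"
proof -
  have nonneg: "\<And>i. i < N \<Longrightarrow> 0 \<le> d i" using assms(1) by (simp add: feasible_def)
  have "g * d k \<le> BED_O g abO (d k)"
    using BED_O_ge_linear assms nonneg by auto
  also have "\<dots> \<le> (\<Sum>i<N. BED_O g abO (d i))"
    using assms nonneg by (intro member_le_sum) (auto intro!: BED_O_nonneg)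
  also have "\<dots> \<le> c" using assms(1) by (simp add: feasible_def)
  finally show ?thesis using assms(2) by (simp add: pos_le_divide_eq mult.commute)
qed

lemma exists_lex_minimizer:
  fixes f \<Phi> :: "'a::topological_space \<Rightarrow> real"
  assumes K: "compact K" "K \<noteq> {}" and f: "continuous_on UNIV f" and \<Phi>: "continuous_on K \<Phi>"
  shows "\<exists>x\<in>K. (\<forall>y\<in>K. f x \<le> f y) \<and> (\<forall>y\<in>K. f y \<le> f x \<longrightarrow> \<Phi> y \<le> \<Phi> x)"
proof -
  obtain x0 where x0: "x0 \<in> K" "\<And>y. y \<in> K \<Longrightarrow> f x0 \<le> f y"
    using continuous_attains_inf[OF K continuous_on_subset[OF f]] by blast
  define Opt where "Opt = K \<inter> {y. f y \<le> f x0}"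
  have "compact Opt"
    unfolding Opt_def using K(1) f by (intro compact_Int_closed closed_Collect_le continuous_on_const)
  moreover have "Opt \<noteq> {}" using x0 by (auto simp: Opt_def)
  moreover have "continuous_on Opt \<Phi>" by (rule continuous_on_subset[OF \<Phi>]) (auto simp: Opt_def)
  ultimately obtain x where x: "x \<in> Opt" "\<And>y. y \<in> Opt \<Longrightarrow> \<Phi> y \<le> \<Phi> x"
    using continuous_attains_sup by metis
  have "x \<in> K" "\<And>y. y \<in> K \<Longrightarrow> f x \<le> f y"
    using x(1) x0(2) by (auto simp: Opt_def intro: order.trans)
  moreover have "\<Phi> y \<le> \<Phi> x" if "y \<in> K" "f y \<le> f x" for y
    using that x x0(2)[of y] by (intro x(2)) (auto simp: Opt_def)
  ultimately show ?thesis by blast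
qed

lemma feasible_fixed_doses_only:
  assumes "Fix \<subseteq> {..<N}" "Brk \<inter> Fix = {}" "\<And>k. k \<in> Fix \<Longrightarrow> dbar k \<ge> 0"
    and "(\<Sum>k\<in>Fix. BED_O g abO (dbar k)) \<le> c"
  shows "feasible N Brk Fix dbar g abO c (\<lambda>k. if k \<in> Fix then dbar k else 0)"
proof -
  have "(\<Sum>k<N. BED_O g abO (if k \<in> Fix then dbar k else 0)) = (\<Sum>k\<in>Fix. BED_O g abO (dbar k))"
    using sum.inter_restrict[of "{..<N}" "\<lambda>k. BED_O g abO (dbar k)" Fix] assms(1)
    by (simp add: if_distrib Int_absorb1 cong: if_cong)
  then show ?thesis using assms(2-) unfolding feasible_def by fastforce
qed

lemma exists_optimal_maximizing_weighted_sum: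
  assumes F: "mono_nonexpansive (growth_map aT phi)"
    and abT: "abT > 0" and abO: "abO > 0" and g: "g > 0" and N: "N \<ge> 1"
    and part: "Brk \<union> Fix \<union> Free = {..<N}" and disj: "Brk \<inter> Fix = {}"
    and dbar_nn: "\<And>k. k \<in> Fix \<Longrightarrow> dbar k \<ge> 0"
    and fix_budget: "(\<Sum>k\<in>Fix. BED_O g abO (dbar k)) \<le> c"
  shows "\<exists>d. optimal aT abT phi X0 N Brk Fix dbar g abO c d \<and>
            (\<forall>e. optimal aT abT phi X0 N Brk Fix dbar g abO c e \<longrightarrow>
               (\<Sum>k<N. real k * e k) \<le> (\<Sum>k<N. real k * d k))"
proof -
  let ?Y = "\<lambda>d. Yplus aT abT phi X0 d (N - 1)" and ?\<Phi> = "\<lambda>d. \<Sum>k<N. real k * d k"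
  \<comment> \<open>Feasibility constrains only the days below N; truncating there lands in a compact box.\<close>
  define K where "K = {d::nat \<Rightarrow> real. \<forall>k. 0 \<le> d k \<and> d k \<le> c / g}
    \<inter> {d. feasible N Brk Fix dbar g abO c d}"
  have sub: "Brk \<subseteq> {..<N}" "Fix \<subseteq> {..<N}" using part by auto
  define trunc where "trunc = (\<lambda>d::nat \<Rightarrow> real. \<lambda>k. if k < N then d k else 0)"
  have trunc: "trunc d \<in> K" "?Y (trunc d) = ?Y d" "?\<Phi> (trunc d) = ?\<Phi> d"
    if d: "feasible N Brk Fix dbar g abO c d" for d
  proof -
    have "0 \<le> (\<Sum>k<N. BED_O g abO (d k))"
      using d g abO by (intro sum_nonneg) (auto simp: feasible_def intro!: BED_O_nonneg)
    then have "0 \<le> c / g" using d g by (simp add: feasible_def)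
    then show "trunc d \<in> K"
      using d sub feasible_dose_le[OF d g abO] unfolding K_def trunc_def feasible_def by auto
    show "?Y (trunc d) = ?Y d" using N by (intro Yplus_cong) (auto simp: trunc_def)
    show "?\<Phi> (trunc d) = ?\<Phi> d" by (simp add: trunc_def)
  qed
  have K_ne: "K \<noteq> {}"
    using trunc(1)[OF feasible_fixed_doses_only[OF sub(2) disj dbar_nn fix_budget]] by blast
  have K_compact: "compact K"
    unfolding K_def using abO by (intro compact_Int_closed compact_bounded_sequences closed_feasible) auto
  have Y_cont: "continuous_on UNIV ?Y" using F abT by (intro continuous_on_Yplus) auto
  have "continuous_on UNIV ?\<Phi>"
    by (intro continuous_on_sum continuous_on_mult continuous_on_const continuous_on_product_coordinates)
  then obtain d where dK: "d \<in> K" and d_min: "\<forall>e\<in>K. ?Y d \<le> ?Y e"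
    and d_max: "\<forall>e\<in>K. ?Y e \<le> ?Y d \<longrightarrow> ?\<Phi> e \<le> ?\<Phi> d"
    using exists_lex_minimizer[OF K_compact K_ne Y_cont] continuous_on_subset by blast
  have d: "feasible N Brk Fix dbar g abO c d" using dK by (simp add: K_def)
  have "optimal aT abT phi X0 N Brk Fix dbar g abO c d"
    unfolding optimal_def using d d_min trunc by metis
  moreover have "?\<Phi> e \<le> ?\<Phi> d" if e: "optimal aT abT phi X0 N Brk Fix dbar g abO c e" for e
  proof -
    have e_feasible: "feasible N Brk Fix dbar g abO c e" and "?Y e \<le> ?Y d"
      using e d unfolding optimal_def by auto
    then have "?\<Phi> (trunc e) \<le> ?\<Phi> d" using d_max trunc(1,2)[OF e_feasible] by auto
    then show ?thesis using trunc(3)[OF e_feasible] by simp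
  qed
  ultimately show ?thesis by blast
qed

lemma sum_fun_upd2:
  assumes "finite A" "j \<in> A" "k \<in> A" "j \<noteq> k"
  shows "(\<Sum>i\<in>A. h i ((d(j := x, k := y)) i)) = (\<Sum>i\<in>A - {j, k}. h i (d i)) + h j x + h k y"
proof -
  have A: "A = insert j (insert k (A - {j, k}))" using assms by auto
  have "(\<Sum>i\<in>A. h i ((d(j := x, k := y)) i))
      = (\<Sum>i\<in>insert j (insert k (A - {j, k})). h i ((d(j := x, k := y)) i))"
    using A by (rule arg_cong)
  also have "\<dots> = h j x + (h k y + (\<Sum>i\<in>A - {j, k}. h i ((d(j := x, k := y)) i)))"
    using assms by (simp add: sum.insert)
  also have "(\<Sum>i\<in>A - {j, k}. h i ((d(j := x, k := y)) i)) = (\<Sum>i\<in>A - {j, k}. h i (d i))"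
    by (intro sum.cong) auto
  finally show ?thesis by (simp only: ac_simps)
qed

lemma feasible_swap:
  assumes d: "feasible N Brk Fix dbar g abO c d"
    and jk: "j \<in> Free" "k \<in> Free" "j \<noteq> k"
    and Free: "Free \<subseteq> {..<N}" "Brk \<inter> Free = {}" "Fix \<inter> Free = {}"
  shows "feasible N Brk Fix dbar g abO c (d(j := d k, k := d j))"
proof -
  have "j < N" "k < N" using jk Free by auto
  then have "(\<Sum>i<N. BED_O g abO ((d(j := d k, k := d j)) i)) = (\<Sum>i<N. BED_O g abO (d i))"
    using sum_fun_upd2[of "{..<N}" j k "\<lambda>i. BED_O g abO" d "d k" "d j"]
      sum_fun_upd2[of "{..<N}" j k "\<lambda>i. BED_O g abO" d "d j" "d k"] jk
    by simp
  then show ?thesis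
    using d jk Free \<open>j < N\<close> \<open>k < N\<close> unfolding feasible_def by auto
qed

lemma optimal_nondecreasing_exists:
  assumes F: "mono_nonexpansive (growth_map aT phi)"
    and abT: "abT > 0" and abO: "abO > 0" and g: "g > 0" and N: "N \<ge> 1"
    and part: "Brk \<union> Fix \<union> Free = {..<N}"
    and disj: "Brk \<inter> Fix = {}" "Brk \<inter> Free = {}" "Fix \<inter> Free = {}"
    and dbar_nn: "\<And>k. k \<in> Fix \<Longrightarrow> dbar k \<ge> 0"
    and fix_budget: "(\<Sum>k\<in>Fix. BED_O g abO (dbar k)) \<le> c"
  shows "\<exists>d. optimal aT abT phi X0 N Brk Fix dbar g abO c d \<and>
            (\<forall>j\<in>Free. \<forall>k\<in>Free. j \<le> k \<longrightarrow> d j \<le> d k)"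
proof -
  obtain d where d: "optimal aT abT phi X0 N Brk Fix dbar g abO c d"
    and d_max: "\<And>e. optimal aT abT phi X0 N Brk Fix dbar g abO c e \<Longrightarrow>
      (\<Sum>i<N. real i * e i) \<le> (\<Sum>i<N. real i * d i)"
    using exists_optimal_maximizing_weighted_sum[OF F abT abO g N part disj(1) dbar_nn fix_budget]
    by blast
  have "d j \<le> d k" if jk: "j \<in> Free" "k \<in> Free" "j \<le> k" for j k
  proof (rule ccontr)
    assume "\<not> d j \<le> d k"
    then have less: "d k < d j" "j < k" using jk(3) by (auto simp: order.order_iff_strict)
    have jkN: "j < N" "k < N" "Free \<subseteq> {..<N}" using jk part by auto
    define e where "e = d(j := d k, k := d j)"
    have "feasible N Brk Fix dbar g abO c e"
      using feasible_swap[OF _ jk(1,2) _ jkN(3) disj(2,3)] d less(2) by (simp add: optimal_def e_def)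
    moreover have "Yplus aT abT phi X0 e (N - 1) \<le> Yplus aT abT phi X0 d (N - 1)"
      unfolding e_def using less jkN d
      by (intro Yplus_swap_le[OF F abT]) (auto simp: optimal_def feasible_def)
    ultimately have "optimal aT abT phi X0 N Brk Fix dbar g abO c e"
      using d unfolding optimal_def by (meson order.trans)
    then have "(\<Sum>i<N. real i * e i) \<le> (\<Sum>i<N. real i * d i)" by (rule d_max)
    moreover have "(\<Sum>i<N. real i * e i) - (\<Sum>i<N. real i * d i) = (real k - real j) * (d j - d k)"
      using sum_fun_upd2[of "{..<N}" j k "\<lambda>i x. real i * x" d "d k" "d j"]
        sum_fun_upd2[of "{..<N}" j k "\<lambda>i x. real i * x" d "d j" "d k"] jkN less(2)
      by (simp add: e_def algebra_simps)
    moreover have "(real k - real j) * (d j - d k) > 0" using less by simp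
    ultimately show False by simp
  qed
  then show ?thesis using d by blast
qed

theorem corollary1:
  fixes aT bT abO g c X0 :: real
    and phi :: "real \<Rightarrow> real"
    and N :: nat
    and Brk Fix Free :: "nat set"
    and dbar :: "nat \<Rightarrow> real"
  assumes aT: "aT > 0" and bT: "bT > 0" and abO: "abO > 0"
    and g: "0 < g" "g < 1" and c: "c > 0" and X0: "X0 > 0"
    and phi_cont: "continuous_on {0<..} phi"
    and phi_mono: "\<And>x y. 0 < x \<Longrightarrow> x \<le> y \<Longrightarrow> phi y \<le> phi x"
    and phi_pos: "\<And>x. x > 0 \<Longrightarrow> phi x > 0"
    and N: "N \<ge> 1"
    and part: "Brk \<union> Fix \<union> Free = {..<N}"
    and disj: "Brk \<inter> Fix = {}" "Brk \<inter> Free = {}" "Fix \<inter> Free = {}"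
    and free_ne: "Free \<noteq> {}"
    and dbar_nn: "\<And>k. k \<in> Fix \<Longrightarrow> dbar k \<ge> 0"
    and fix_budget: "(\<Sum>k\<in>Fix. BED_O g abO (dbar k)) \<le> c"
  shows "(abO \<ge> g * (aT / bT) \<longrightarrow>
            (\<exists>d. optimal aT (aT / bT) phi X0 N Brk Fix dbar g abO c d \<and>
                 (\<forall>k\<in>Free. k \<noteq> Max Free \<longrightarrow> d k = 0)))
       \<and> (abO < g * (aT / bT) \<longrightarrow>
            (\<exists>d. optimal aT (aT / bT) phi X0 N Brk Fix dbar g abO c d \<and>
                 (\<forall>j\<in>Free. \<forall>k\<in>Free. j \<le> k \<longrightarrow> d j \<le> d k)))"
proof -
  have abT: "aT / bT > 0" using aT bT by simp
  have F: "mono_nonexpansive (growth_map aT phi)"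
    using aT phi_cont phi_mono phi_pos by (rule mono_nonexpansive_growth_map)
  show ?thesis
    using optimal_single_dose_exists[OF F abT abO g(1) _ part disj free_ne dbar_nn fix_budget]
      optimal_nondecreasing_exists[OF F abT abO g(1) N part disj dbar_nn fix_budget]
    by blast
qed

end
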